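(* Let $G=(V,E)$ be a graph and $\mathcal{C}$ a 2-coloring of $G$ with red degree sequence $d$. Then \[\dim\mathcal{A}(G,\mathcal{C})=\#E_d-\#V+b(V,E_d),\] where $b(V,E_d)$ denotes the number of bipartite connected components of the graph $(V,E_d)$.
   Context: Graphs are finite, undirected, may have parallel edges but no loops. A 2-coloring is $\mathcal{C}:E\to\{R,B\}$; its red degree sequence is $d=(d(v):v\in V)$ where $d(v)$ is the number of red edges at $v$. $\mathcal{K}(d)$ is the set of all 2-colorings of $G$ with red degree sequence $d$. The alternating cone $\mathcal{A}(G,\mathcal{C})\subseteq\mathbb{R}^E$ is the set of $x\ge0$ such that at each vertex the sum of $x$ over incident red edges equals the sum over incident blue edges. A closed alternating walk (CAW) is a walk $(v_0,e_1,v_1,\dots,e_m,v_m)$ with $v_0=v_m$, consecutive edges of different colors, and $\mathcal{C}(e_m)\ne\mathcal{C}(e_1)$. $E_d$ is the set of edges $e\in E$ such that some 2-coloring in $\mathcal{K}(d)$ has a CAW containing $e$ (isolated vertices count as bipartite components of $(V,E_d)$). *)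

theory Defs
  imports "HOL-Analysis.Analysis"
begin

text \<open>A (multi)graph: finite vertex set V, edge set E (a subset of a finite
type of edge names, so parallel edges are allowed), endpoint map ends;
every edge has exactly two distinct endpoints in V (no loops).
A 2-coloring is C :: 'e \<Rightarrow> bool, True = red, False = blue.\<close>

definition graph :: "'v set \<Rightarrow> 'e set \<Rightarrow> ('e \<Rightarrow> 'v set) \<Rightarrow> bool" where
  "graph V E ends \<longleftrightarrow> finite V \<and> finite E \<and>
     (\<forall>e\<in>E. card (ends e) = 2 \<and> ends e \<subseteq> V)"

definition red_degree :: "'e set \<Rightarrow> ('e \<Rightarrow> 'v set) \<Rightarrow> ('e \<Rightarrow> bool) \<Rightarrow> 'v \<Rightarrow> nat" where
  "red_degree E ends C v = card {e\<in>E. v \<in> ends e \<and> C e}"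

text \<open>Alternating cone, as a subset of R^E (embedded in real^'e, coordinates
outside E being zero).\<close>
definition alt_cone :: "'v set \<Rightarrow> 'e::finite set \<Rightarrow> ('e \<Rightarrow> 'v set) \<Rightarrow> ('e \<Rightarrow> bool) \<Rightarrow> (real^'e) set" where
  "alt_cone V E ends C = {x. (\<forall>e\<in>E. x $ e \<ge> 0) \<and> (\<forall>e. e \<notin> E \<longrightarrow> x $ e = 0) \<and>
      (\<forall>v\<in>V. (\<Sum>e\<in>{e\<in>E. v \<in> ends e \<and> C e}. x $ e) =
              (\<Sum>e\<in>{e\<in>E. v \<in> ends e \<and> \<not> C e}. x $ e))}"

text \<open>Closed alternating walk (v_0,e_1,v_1,...,e_m,v_m): vertex list vs of length m+1,
edge list es of length m (es ! i = e_{i+1}).\<close>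
definition is_CAW :: "'e set \<Rightarrow> ('e \<Rightarrow> 'v set) \<Rightarrow> ('e \<Rightarrow> bool) \<Rightarrow> 'v list \<Rightarrow> 'e list \<Rightarrow> bool" where
  "is_CAW E ends C vs es \<longleftrightarrow>
     length es \<ge> 1 \<and> length vs = length es + 1 \<and>
     (\<forall>i<length es. es ! i \<in> E \<and> ends (es ! i) = {vs ! i, vs ! (i+1)}) \<and>
     vs ! 0 = vs ! length es \<and>
     (\<forall>i. i + 1 < length es \<longrightarrow> C (es ! i) \<noteq> C (es ! (i+1))) \<and>
     C (last es) \<noteq> C (hd es)"

definition E_d :: "'v set \<Rightarrow> 'e set \<Rightarrow> ('e \<Rightarrow> 'v set) \<Rightarrow> ('v \<Rightarrow> nat) \<Rightarrow> 'e set" where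
  "E_d V E ends d = {e\<in>E. \<exists>C'. (\<forall>v\<in>V. red_degree E ends C' v = d v) \<and>
       (\<exists>vs es. is_CAW E ends C' vs es \<and> e \<in> set es)}"

definition components :: "'v set \<Rightarrow> 'e set \<Rightarrow> ('e \<Rightarrow> 'v set) \<Rightarrow> 'v set set" where
  "components V F ends = V // Restr ({(u,v). \<exists>e\<in>F. ends e = {u,v}}\<^sup>*) V"

definition bipartite_on :: "'v set \<Rightarrow> 'e set \<Rightarrow> ('e \<Rightarrow> 'v set) \<Rightarrow> bool" where
  "bipartite_on K F ends \<longleftrightarrow> (\<exists>f :: 'v \<Rightarrow> bool. \<forall>e\<in>F. ends e \<subseteq> K \<longrightarrow>
      (\<forall>u v. ends e = {u,v} \<longrightarrow> f u \<noteq> f v))"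

definition num_bip_components :: "'v set \<Rightarrow> 'e set \<Rightarrow> ('e \<Rightarrow> 'v set) \<Rightarrow> nat" where
  "num_bip_components V F ends = card {K \<in> components V F ends. bipartite_on K F ends}"

end

theory Submission
  imports Defs
begin

text \<open>A vector lies in the alternating cone iff it is an alternating circulation: nonnegative,
  supported on the edges, and balanced: at every vertex its red and blue weights agree.
  The multiplicity vector of a closed alternating walk is such a circulation; conversely every
  edge in the support of a circulation lies on a closed alternating walk, found by a cut argument
  in the graph of states (vertex, colour of the next edge). Circulations can be transferred
  between colourings with the same red degrees, so the support of the cone is exactly \<open>E_d\<close>.
  The cone then spans the space of balanced vectors supported on \<open>E_d\<close>, the orthogonal
  complement of the rows of the signed incidence matrix of \<open>(V, E_d)\<close>. A combination of these
  rows vanishes iff its coefficients are antisymmetric along every edge, so their rank is \<open>#V\<close>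
  minus the number of bipartite components.\<close>

section \<open>Alternating circulations and closed alternating walks\<close>

definition colour_sign :: "('e \<Rightarrow> bool) \<Rightarrow> 'e \<Rightarrow> real" where
  "colour_sign C e = (if C e then 1 else -1)"

definition balance :: "'e set \<Rightarrow> ('e \<Rightarrow> 'v set) \<Rightarrow> ('e \<Rightarrow> bool) \<Rightarrow> ('e \<Rightarrow> real) \<Rightarrow> 'v \<Rightarrow> real" where
  "balance E ends C x v = (\<Sum>e\<in>{e\<in>E. v \<in> ends e}. colour_sign C e * x e)"

lemma balance_eq_red_minus_blue:
  assumes "finite E"
  shows "balance E ends C x v =
    (\<Sum>e\<in>{e\<in>E. v \<in> ends e \<and> C e}. x e) - (\<Sum>e\<in>{e\<in>E. v \<in> ends e \<and> \<not> C e}. x e)"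
proof -
  have "balance E ends C x v = (\<Sum>e\<in>{e\<in>E. v \<in> ends e}. if C e then x e else - x e)"
    unfolding balance_def colour_sign_def by (intro sum.cong) auto
  also have "\<dots> = (\<Sum>e\<in>{e\<in>E. v \<in> ends e} \<inter> {e. C e}. x e) +
      (\<Sum>e\<in>{e\<in>E. v \<in> ends e} \<inter> - {e. C e}. - x e)"
    by (rule sum.If_cases) (use assms in auto)
  also have "{e\<in>E. v \<in> ends e} \<inter> {e. C e} = {e\<in>E. v \<in> ends e \<and> C e}" by auto
  also have "{e\<in>E. v \<in> ends e} \<inter> - {e. C e} = {e\<in>E. v \<in> ends e \<and> \<not> C e}" by auto
  finally show ?thesis by (simp add: sum_negf)
qed

lemma graph_edgeE:
  assumes "graph V E ends" "e \<in> E"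
  obtains a b where "ends e = {a, b}" "a \<noteq> b" "a \<in> V" "b \<in> V"
  using assms unfolding graph_def by (auto simp: card_2_iff)

lemma graph_ends_distinct:
  assumes "graph V E ends" "e \<in> E" "ends e = {a, b}"
  shows "a \<noteq> b"
  using assms unfolding graph_def by auto

definition alt_circulation ::
    "'v set \<Rightarrow> 'e set \<Rightarrow> ('e \<Rightarrow> 'v set) \<Rightarrow> ('e \<Rightarrow> bool) \<Rightarrow> ('e \<Rightarrow> real) \<Rightarrow> bool" where
  "alt_circulation V E ends C x \<longleftrightarrow>
    (\<forall>e. 0 \<le> x e) \<and> (\<forall>e. e \<notin> E \<longrightarrow> x e = 0) \<and> (\<forall>v\<in>V. balance E ends C x v = 0)"

lemma alt_cone_iff:
  assumes "finite E"
  shows "x \<in> alt_cone V E ends C \<longleftrightarrow> alt_circulation V E ends C (($) x)"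
  unfolding alt_cone_def alt_circulation_def balance_eq_red_minus_blue[OF assms]
  by (auto intro: order.eq_iff[THEN iffD2])

lemma sum_lessThan_rotate:
  fixes h :: "nat \<Rightarrow> 'a::comm_monoid_add"
  shows "(\<Sum>i<m. h (Suc i mod m)) = (\<Sum>i<m. h i)"
proof (cases m)
  case (Suc k)
  have "(\<Sum>i<m. h (Suc i mod m)) = (\<Sum>i<k. h (Suc i)) + h 0"
    by (simp add: Suc)
  also have "\<dots> = (\<Sum>i<m. h i)"
    by (simp only: Suc sum.lessThan_Suc_shift add.commute)
  finally show ?thesis .
qed simp

lemma CAW_cyclic:
  assumes "is_CAW E ends C vs es" "i < length es"
  shows "vs ! Suc i = vs ! (Suc i mod length es)" "C (es ! (Suc i mod length es)) \<noteq> C (es ! i)"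
proof -
  have ne: "es \<noteq> []" and closed: "vs ! 0 = vs ! length es" and lst: "C (last es) \<noteq> C (hd es)"
    and alt: "\<And>i. Suc i < length es \<Longrightarrow> C (es ! i) \<noteq> C (es ! Suc i)"
    using assms(1) unfolding is_CAW_def by auto
  show "vs ! Suc i = vs ! (Suc i mod length es)"
    using assms(2) closed by (cases "Suc i = length es") auto
  show "C (es ! (Suc i mod length es)) \<noteq> C (es ! i)"
  proof (cases "Suc i = length es")
    case True
    then have "i = length es - 1" by simp
    then show ?thesis using lst ne True by (simp add: last_conv_nth hd_conv_nth)
  next
    case False
    then show ?thesis using alt[of i] assms(2) by auto
  qed
qed

text \<open>Each passage of the walk through a vertex uses two consecutive edges of opposite colours.\<close>
lemma CAW_multiplicity_balanced:
  assumes g: "graph V E ends" and w: "is_CAW E ends C vs es"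
  shows "balance E ends C (\<lambda>e. \<Sum>i<length es. of_bool (es ! i = e)) v = 0"
proof -
  let ?m = "length es"
  define s where "s i = colour_sign C (es ! i)" for i
  define visit where "visit j = (if vs ! j = v then s j else 0)" for j
  have edge: "es ! i \<in> E" "ends (es ! i) = {vs ! i, vs ! Suc i}" if "i < ?m" for i
    using w that unfolding is_CAW_def by auto
  have loopless: "vs ! i \<noteq> vs ! Suc i" if "i < ?m" for i
    using graph_ends_distinct[OF g edge[OF that]] .
  have "balance E ends C (\<lambda>e. \<Sum>i<?m. of_bool (es ! i = e)) v =
      (\<Sum>i<?m. \<Sum>e\<in>{e\<in>E. v \<in> ends e}. if es ! i = e then colour_sign C e else 0)"
    unfolding balance_def sum_distrib_left
    by (subst sum.swap) (auto simp: of_bool_def intro!: sum.cong)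
  also have "\<dots> = (\<Sum>i<?m. if v \<in> ends (es ! i) then s i else 0)"
    using edge(1) g unfolding s_def graph_def by (intro sum.cong refl) (simp add: sum.delta')
  also have "\<dots> = (\<Sum>i<?m. visit i + (if vs ! Suc i = v then s i else 0))"
  proof (intro sum.cong refl)
    fix i assume "i \<in> {..<?m}"
    then show "(if v \<in> ends (es ! i) then s i else 0) =
        visit i + (if vs ! Suc i = v then s i else 0)"
      using edge(2)[of i] loopless[of i] unfolding visit_def by auto
  qed
  also have "\<dots> = (\<Sum>i<?m. visit i) - (\<Sum>i<?m. visit (Suc i mod ?m))"
  proof -
    have "(if vs ! Suc i = v then s i else 0) = - visit (Suc i mod ?m)" if "i < ?m" for i
      using CAW_cyclic[OF w that] unfolding visit_def s_def colour_sign_def by auto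
    then show ?thesis by (simp add: sum_subtractf)
  qed
  finally show ?thesis by (simp add: sum_lessThan_rotate)
qed

text \<open>Where the two colourings disagree, replace \<open>w e\<close> by \<open>M - w e\<close> for a large constant \<open>M\<close>:
  equal red degrees make the contributions of \<open>M\<close> cancel at every vertex.\<close>
lemma alt_circulation_recolour:
  assumes fin: "finite E"
    and same_degrees: "\<forall>v\<in>V. red_degree E ends C' v = red_degree E ends C v"
    and w: "alt_circulation V E ends C' w" and w_pos: "0 < w e0"
  shows "\<exists>a. alt_circulation V E ends C a \<and> 0 < a e0"
proof -
  have w_nonneg: "\<forall>e. 0 \<le> w e" and w_support: "\<forall>e. e \<notin> E \<longrightarrow> w e = 0"
    and w_balanced: "\<forall>v\<in>V. balance E ends C' w v = 0"
    using w unfolding alt_circulation_def by auto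
  define M where "M = (\<Sum>e\<in>E. w e) + 1"
  have w_less: "w e < M" for e
  proof -
    have "w e \<le> (\<Sum>e\<in>E. w e)"
      using w_nonneg w_support fin by (cases "e \<in> E") (auto intro: member_le_sum sum_nonneg)
    then show ?thesis by (simp add: M_def)
  qed
  define a where "a e = (if e \<in> E \<and> C e \<noteq> C' e then M - w e else w e)" for e
  have "\<forall>e. 0 \<le> a e" using w_less w_nonneg unfolding a_def by (auto simp: less_imp_le)
  moreover have "\<forall>e. e \<notin> E \<longrightarrow> a e = 0" using w_support unfolding a_def by auto
  moreover have "balance E ends C a v = 0" if v: "v \<in> V" for v
  proof -
    let ?S = "{e\<in>E. v \<in> ends e}"
    have "balance E ends C a v =
        (\<Sum>e\<in>?S. colour_sign C' e * w e + M * (of_bool (C e) - of_bool (C' e)))"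
      unfolding balance_def
      by (intro sum.cong refl) (auto simp: a_def colour_sign_def algebra_simps)
    also have "\<dots> = balance E ends C' w v +
        M * ((\<Sum>e\<in>?S. of_bool (C e)) - (\<Sum>e\<in>?S. of_bool (C' e)))"
      unfolding balance_def
      by (simp add: sum.distrib sum_distrib_left sum_subtractf right_diff_distrib)
    also have "(\<Sum>e\<in>?S. of_bool (C e)) - (\<Sum>e\<in>?S. of_bool (C' e)) =
        real (red_degree E ends C v) - real (red_degree E ends C' v)"
      using fin unfolding red_degree_def by (simp add: Int_def conj_assoc)
    finally show ?thesis using same_degrees w_balanced v by simp
  qed
  moreover have "0 < a e0" using w_pos w_less[of e0] unfolding a_def by auto
  ultimately show ?thesis unfolding alt_circulation_def by blast
qed

definition alternating_walk ::
    "'e set \<Rightarrow> ('e \<Rightarrow> 'v set) \<Rightarrow> ('e \<Rightarrow> bool) \<Rightarrow> 'v list \<Rightarrow> 'e list \<Rightarrow> bool" where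
  "alternating_walk E ends C vs es \<longleftrightarrow> es \<noteq> [] \<and> length vs = Suc (length es) \<and>
     (\<forall>i<length es. es ! i \<in> E \<and> ends (es ! i) = {vs ! i, vs ! Suc i}) \<and>
     (\<forall>i. Suc i < length es \<longrightarrow> C (es ! i) \<noteq> C (es ! Suc i))"

lemma is_CAW_iff:
  "is_CAW E ends C vs es \<longleftrightarrow>
    alternating_walk E ends C vs es \<and> vs ! 0 = vs ! length es \<and> C (last es) \<noteq> C (hd es)"
  unfolding is_CAW_def alternating_walk_def by (auto simp: Suc_le_eq)

lemma alternating_walk_single:
  "e \<in> E \<Longrightarrow> ends e = {a, b} \<Longrightarrow> alternating_walk E ends C [a, b] [e]"
  unfolding alternating_walk_def by simp

lemma alternating_walk_Cons:
  assumes "alternating_walk E ends C vs es" "e \<in> E" "ends e = {a, vs ! 0}" "C e \<noteq> C (hd es)"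
  shows "alternating_walk E ends C (a # vs) (e # es)"
  using assms unfolding alternating_walk_def by (auto simp: nth_Cons' hd_conv_nth)

text \<open>The state \<open>(v, c)\<close> records a position \<open>v\<close> together with the colour \<open>c\<close> of the next edge
  to be traversed; arcs follow the edges in the support of \<open>x\<close>.\<close>
definition alt_arcs ::
    "'e set \<Rightarrow> ('e \<Rightarrow> 'v set) \<Rightarrow> ('e \<Rightarrow> bool) \<Rightarrow> ('e \<Rightarrow> real) \<Rightarrow> ('v \<times> bool) rel" where
  "alt_arcs E ends C x = {((a, C e), (b, \<not> C e)) | a b e. e \<in> E \<and> 0 < x e \<and> ends e = {a, b}}"

lemma alt_arcs_trancl_imp_walk:
  assumes "(s, t) \<in> (alt_arcs E ends C x)\<^sup>+"
  shows "\<exists>vs es. alternating_walk E ends C vs es \<and> vs ! 0 = fst s \<and> vs ! length es = fst t \<and>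
    C (hd es) = snd s \<and> snd t = (\<not> C (last es))"
  using assms
proof (induction rule: converse_trancl_induct)
  case (base s)
  then obtain a b e where "s = (a, C e)" "t = (b, \<not> C e)" "e \<in> E" "ends e = {a, b}"
    unfolding alt_arcs_def by blast
  then show ?case using alternating_walk_single[of e E ends a b C] by force
next
  case (step s s')
  then obtain a b e where s: "s = (a, C e)" "s' = (b, \<not> C e)" "e \<in> E" "ends e = {a, b}"
    unfolding alt_arcs_def by blast
  from step.IH obtain vs es where walk: "alternating_walk E ends C vs es" "vs ! 0 = fst s'"
    "vs ! length es = fst t" "C (hd es) = snd s'" "snd t = (\<not> C (last es))"
    by blast
  have "alternating_walk E ends C (a # vs) (e # es)"
    using walk s by (intro alternating_walk_Cons) auto
  moreover have "es \<noteq> []" using walk(1) unfolding alternating_walk_def by simp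
  ultimately show ?case using walk s by (intro exI[of _ "a # vs"] exI[of _ "e # es"]) auto
qed

lemma sum_edges_eq_sum_vertices:
  assumes "graph V E ends"
  shows "(\<Sum>e\<in>E. \<Sum>a\<in>ends e. f a e) = (\<Sum>a\<in>V. \<Sum>e\<in>{e\<in>E. a \<in> ends e}. f a e)"
proof -
  have fin: "finite V" "finite E" and sub: "\<And>e. e \<in> E \<Longrightarrow> ends e \<subseteq> V"
    using assms unfolding graph_def by auto
  have "(\<Sum>e\<in>E. \<Sum>a\<in>ends e. f a e) = (\<Sum>e\<in>E. \<Sum>a\<in>{a\<in>V. a \<in> ends e}. f a e)"
    using sub by (intro sum.cong) auto
  also have "\<dots> = (\<Sum>a\<in>V. \<Sum>e\<in>{e\<in>E. a \<in> ends e}. f a e)"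
    using sum.swap_restrict[OF fin, of f "\<lambda>a e. a \<in> ends e"] by simp
  finally show ?thesis .
qed

lemma balanced_potential_flux_eq_0:
  assumes g: "graph V E ends" and balanced: "\<forall>v\<in>V. balance E ends C x v = 0"
  shows "(\<Sum>e\<in>E. x e * (\<Sum>a\<in>ends e. k a * colour_sign C e)) = 0"
proof -
  have "(\<Sum>e\<in>E. x e * (\<Sum>a\<in>ends e. k a * colour_sign C e)) =
      (\<Sum>a\<in>V. \<Sum>e\<in>{e\<in>E. a \<in> ends e}. x e * (k a * colour_sign C e))"
    unfolding sum_distrib_left by (rule sum_edges_eq_sum_vertices[OF g])
  also have "\<dots> = (\<Sum>a\<in>V. k a * balance E ends C x a)"
    unfolding balance_def sum_distrib_left by (intro sum.cong refl) (simp add: ac_simps)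
  also have "\<dots> = 0" using balanced by simp
  finally show ?thesis .
qed

text \<open>A cut argument: the net flow of \<open>x\<close> into a set of states closed under arcs vanishes,
  so no arc can enter such a set from outside.\<close>
lemma alt_arcs_closed_imp_converse_closed:
  assumes g: "graph V E ends" and x: "alt_circulation V E ends C x"
    and closed: "alt_arcs E ends C x `` T \<subseteq> T"
    and arc: "(s, t) \<in> alt_arcs E ends C x" and "t \<in> T"
  shows "s \<in> T"
proof -
  have fin: "finite E" using g unfolding graph_def by simp
  have nonneg: "\<forall>e. 0 \<le> x e" and balanced: "\<forall>v\<in>V. balance E ends C x v = 0"
    using x unfolding alt_circulation_def by auto
  define k where "k a = of_bool ((a, True) \<in> T) - (of_bool ((a, False) \<in> T) :: real)" for a
  define flux where "flux e = x e * (\<Sum>a\<in>ends e. k a * colour_sign C e)" for e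
  have flux_edge: "flux e = x e * ((of_bool ((a, C e) \<in> T) - of_bool ((b, \<not> C e) \<in> T)) +
      (of_bool ((b, C e) \<in> T) - of_bool ((a, \<not> C e) \<in> T)))"
    if "e \<in> E" "ends e = {a, b}" for e a b
  proof -
    have "a \<noteq> b" using graph_ends_distinct[OF g that] .
    then show ?thesis using that unfolding flux_def k_def colour_sign_def
      by (cases "C e") (simp_all add: algebra_simps)
  qed
  have total: "(\<Sum>e\<in>E. - flux e) = 0"
    using balanced_potential_flux_eq_0[OF g balanced] unfolding flux_def by (simp add: sum_negf)
  have flux_nonpos: "flux e \<le> 0" if e: "e \<in> E" for e
  proof (cases "x e = 0")
    case False
    then have pos: "0 < x e" using nonneg by (simp add: order_less_le)
    obtain a b where ab: "ends e = {a, b}" using graph_edgeE[OF g e] by metis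
    have "((a, C e), (b, \<not> C e)) \<in> alt_arcs E ends C x"
      and "((b, C e), (a, \<not> C e)) \<in> alt_arcs E ends C x"
      using e pos ab unfolding alt_arcs_def by (auto simp: insert_commute)
    then have "(a, C e) \<in> T \<longrightarrow> (b, \<not> C e) \<in> T" "(b, C e) \<in> T \<longrightarrow> (a, \<not> C e) \<in> T"
      using closed by auto
    then show ?thesis using flux_edge[OF e ab] pos by (auto simp: mult_le_0_iff)
  qed (simp add: flux_def)
  obtain a b e where st: "s = (a, C e)" "t = (b, \<not> C e)" and e: "e \<in> E" "0 < x e" "ends e = {a, b}"
    using arc unfolding alt_arcs_def by blast
  have "flux e = 0" using total e(1) flux_nonpos fin by (subst (asm) sum_nonneg_eq_0_iff) auto
  then have "(of_bool ((a, C e) \<in> T) - of_bool ((b, \<not> C e) \<in> T)) +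
      (of_bool ((b, C e) \<in> T) - of_bool ((a, \<not> C e) \<in> T)) = (0::real)"
    using flux_edge[OF e(1,3)] e(2) by simp
  moreover have "((b, C e), (a, \<not> C e)) \<in> alt_arcs E ends C x"
    using e unfolding alt_arcs_def by (auto simp: insert_commute)
  then have "(b, C e) \<in> T \<longrightarrow> (a, \<not> C e) \<in> T" using closed by auto
  ultimately show ?thesis using \<open>t \<in> T\<close> st by (auto simp: of_bool_def split: if_splits)
qed

lemma alt_circulation_support_on_CAW:
  assumes g: "graph V E ends" and x: "alt_circulation V E ends C x" and pos: "0 < x e0"
  shows "\<exists>vs es. is_CAW E ends C vs es \<and> e0 \<in> set es"
proof -
  let ?A = "alt_arcs E ends C x"
  have e0: "e0 \<in> E" using x pos unfolding alt_circulation_def by force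
  obtain u v where uv: "ends e0 = {u, v}" using graph_edgeE[OF g e0] by metis
  define c where "c = C e0"
  define T where "T = ?A\<^sup>* `` {(v, \<not> c)}"
  have arc: "((u, c), (v, \<not> c)) \<in> ?A"
    unfolding alt_arcs_def c_def using e0 pos uv by blast
  have "?A `` T \<subseteq> T"
    unfolding T_def by (auto intro: rtrancl_into_rtrancl)
  moreover have "(v, \<not> c) \<in> T" unfolding T_def by simp
  ultimately have "(u, c) \<in> T"
    using alt_arcs_closed_imp_converse_closed[OF g x _ arc] by blast
  then have "((v, \<not> c), (u, c)) \<in> ?A\<^sup>+"
    unfolding T_def by (auto dest: rtranclD)
  from alt_arcs_trancl_imp_walk[OF this] obtain vs es where walk: "alternating_walk E ends C vs es"
    "vs ! 0 = v" "vs ! length es = u" "C (hd es) = (\<not> c)" "c = (\<not> C (last es))"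
    by auto
  have "alternating_walk E ends C (u # vs) (e0 # es)"
    using walk(1,2,4) uv e0 c_def by (intro alternating_walk_Cons) auto
  moreover have "es \<noteq> []" using walk(1) unfolding alternating_walk_def by simp
  ultimately have "is_CAW E ends C (u # vs) (e0 # es)"
    using walk(3,5) c_def unfolding is_CAW_iff by simp
  then show ?thesis by (meson list.set_intros(1))
qed

lemma E_d_imp_alt_cone_positive:
  assumes g: "graph V E ends" and d: "\<forall>v\<in>V. d v = red_degree E ends C v"
    and e: "e \<in> E_d V E ends d"
  shows "\<exists>x\<in>alt_cone V E ends C. 0 < x $ e"
proof -
  have fin: "finite E" using g unfolding graph_def by simp
  obtain C' vs es where C': "\<forall>v\<in>V. red_degree E ends C' v = d v"
    and walk: "is_CAW E ends C' vs es" and "e \<in> set es"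
    using e unfolding E_d_def by blast
  then obtain j where j: "j < length es" "es ! j = e" by (auto simp: in_set_conv_nth)
  define w where "w e = (\<Sum>i<length es. of_bool (es ! i = e) :: real)" for e
  have "\<forall>e. 0 \<le> w e" unfolding w_def by (simp add: sum_nonneg)
  moreover have "\<forall>e. e \<notin> E \<longrightarrow> w e = 0"
    using walk unfolding w_def is_CAW_def by (auto intro!: sum.neutral)
  moreover have "\<forall>v\<in>V. balance E ends C' w v = 0"
    unfolding w_def using CAW_multiplicity_balanced[OF g walk] by blast
  ultimately have "alt_circulation V E ends C' w" unfolding alt_circulation_def by blast
  moreover have "0 < w e"
    unfolding w_def using j by (intro sum_pos2[of _ j]) auto
  moreover have same_degrees: "\<forall>v\<in>V. red_degree E ends C' v = red_degree E ends C v"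
    using C' d by simp
  ultimately obtain a where a: "alt_circulation V E ends C a" "0 < a e"
    using alt_circulation_recolour[OF fin same_degrees] by blast
  have "($) (\<chi> i. a i) = a" by (simp add: fun_eq_iff)
  then have "(\<chi> i. a i) \<in> alt_cone V E ends C" unfolding alt_cone_iff[OF fin] using a(1) by simp
  then show ?thesis using a(2) by force
qed

lemma alt_cone_nonzero_imp_E_d:
  assumes g: "graph V E ends" and d: "\<forall>v\<in>V. d v = red_degree E ends C v"
    and x: "x \<in> alt_cone V E ends C" and "x $ e \<noteq> 0"
  shows "e \<in> E_d V E ends d"
proof -
  have fin: "finite E" using g unfolding graph_def by simp
  have circ: "alt_circulation V E ends C (($) x)" using x unfolding alt_cone_iff[OF fin] .
  then have "e \<in> E" "0 < x $ e"
    using \<open>x $ e \<noteq> 0\<close> unfolding alt_circulation_def by (auto simp: order_less_le)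
  moreover obtain vs es where "is_CAW E ends C vs es" "e \<in> set es"
    using alt_circulation_support_on_CAW[OF g circ] \<open>0 < x $ e\<close> by blast
  ultimately show ?thesis unfolding E_d_def using d by auto
qed

section \<open>The span of the alternating cone\<close>

definition balanced_space ::
    "'v set \<Rightarrow> 'e set \<Rightarrow> ('e \<Rightarrow> 'v set) \<Rightarrow> ('e \<Rightarrow> bool) \<Rightarrow> 'e::finite set \<Rightarrow> (real^'e) set" where
  "balanced_space V E ends C F =
    {y. (\<forall>i. i \<notin> F \<longrightarrow> y $ i = 0) \<and> (\<forall>v\<in>V. balance E ends C (($) y) v = 0)}"

lemma subspace_balanced_space: "subspace (balanced_space V E ends C F)"
  unfolding subspace_def balanced_space_def balance_def
  by (simp add: algebra_simps sum.distrib sum_distrib_left[symmetric])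

lemma alt_cone_eq_nonneg_balanced:
  assumes g: "graph V E ends" and d: "\<forall>v\<in>V. d v = red_degree E ends C v"
  shows "alt_cone V E ends C = {x \<in> balanced_space V E ends C (E_d V E ends d). \<forall>j. 0 \<le> x $ j}"
proof -
  have fin: "finite E" using g unfolding graph_def by simp
  have "E_d V E ends d \<subseteq> E" unfolding E_d_def by auto
  then have "x \<in> alt_cone V E ends C \<longleftrightarrow>
      x \<in> balanced_space V E ends C (E_d V E ends d) \<and> (\<forall>j. 0 \<le> x $ j)"
    for x using alt_cone_nonzero_imp_E_d[OF g d, of x]
    unfolding balanced_space_def alt_cone_iff[OF fin] alt_circulation_def by auto
  then show ?thesis by blast
qed

text \<open>Adding a large multiple of a nonnegative vector that is positive on the whole support
  of \<open>L\<close> makes any vector of \<open>L\<close> nonnegative.\<close>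
lemma span_nonneg_part_of_subspace:
  fixes L :: "(real^'n) set"
  assumes L: "subspace L"
    and pos: "\<And>i. \<exists>y\<in>L. y $ i \<noteq> 0 \<Longrightarrow> \<exists>x\<in>L. (\<forall>j. 0 \<le> x $ j) \<and> 0 < x $ i"
  shows "span {x \<in> L. \<forall>j. 0 \<le> x $ j} = L"
proof (rule span_subspace[OF _ _ L])
  let ?P = "{x \<in> L. \<forall>j. 0 \<le> x $ j}"
  define I where "I = {i. \<exists>y\<in>L. y $ i \<noteq> 0}"
  have "\<forall>i\<in>I. \<exists>x. x \<in> L \<and> (\<forall>j. 0 \<le> x $ j) \<and> 0 < x $ i"
    using pos unfolding I_def by blast
  then obtain q where q: "\<And>i. i \<in> I \<Longrightarrow> q i \<in> L \<and> (\<forall>j. 0 \<le> q i $ j) \<and> 0 < q i $ i"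
    using bchoice by metis
  define p where "p = (\<Sum>i\<in>I. q i)"
  have p: "p \<in> L" "\<forall>j. 0 \<le> p $ j"
    unfolding p_def using q by (auto intro: subspace_sum[OF L] sum_nonneg)
  have p_pos: "0 < p $ i" if "i \<in> I" for i
    unfolding p_def sum_component using q that by (intro sum_pos2[of I i]) auto
  show "L \<subseteq> span ?P"
  proof
    fix y assume y: "y \<in> L"
    define t where "t = (\<Sum>i\<in>I. \<bar>y $ i\<bar> / p $ i)"
    have "0 \<le> y $ i + t * p $ i" for i
    proof (cases "i \<in> I")
      case True
      have "\<bar>y $ i\<bar> / p $ i \<le> t"
        unfolding t_def using True p_pos by (intro member_le_sum) (auto intro!: divide_nonneg_pos)
      then show ?thesis using p_pos[OF True] by (simp add: divide_le_eq)
    next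
      case False
      have "0 \<le> t" unfolding t_def using p_pos by (auto intro!: sum_nonneg divide_nonneg_pos)
      then show ?thesis using False y p(2) unfolding I_def by simp
    qed
    then have "y + t *\<^sub>R p \<in> ?P"
      using y p(1) L by (simp add: subspace_add subspace_scale)
    then have "(y + t *\<^sub>R p) - t *\<^sub>R p \<in> span ?P"
      using p by (intro span_diff span_scale span_base) auto
    then show "y \<in> span ?P" by simp
  qed
qed auto

section \<open>Rank of the signed incidence matrix\<close>

definition adjacency :: "'e set \<Rightarrow> ('e \<Rightarrow> 'v set) \<Rightarrow> 'v rel" where
  "adjacency F ends = {(u, v). \<exists>e\<in>F. ends e = {u, v}}"

lemma components_eq_quotient: "components V F ends = V // Restr ((adjacency F ends)\<^sup>*) V"
  unfolding components_def adjacency_def ..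

lemma equiv_component_relation: "equiv V (Restr ((adjacency F ends)\<^sup>*) V)"
proof -
  have "sym (adjacency F ends)" unfolding adjacency_def sym_def by (auto simp: insert_commute)
  then have "sym ((adjacency F ends)\<^sup>*)" by (rule sym_rtrancl)
  then show ?thesis
    unfolding equiv_def refl_on_def sym_def trans_def by (blast intro: rtrancl_trans)
qed

lemma components_subset: "K \<in> components V F ends \<Longrightarrow> K \<subseteq> V"
  using in_quotient_imp_subset[OF equiv_component_relation] unfolding components_eq_quotient by blast

lemma components_nonempty: "K \<in> components V F ends \<Longrightarrow> K \<noteq> {}"
  using in_quotient_imp_non_empty[OF equiv_component_relation] unfolding components_eq_quotient by blast

lemma components_disjoint:
  "K \<in> components V F ends \<Longrightarrow> K' \<in> components V F ends \<Longrightarrow> K \<noteq> K' \<Longrightarrow> K \<inter> K' = {}"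
  using quotient_disj[OF equiv_component_relation] unfolding components_eq_quotient by blast

lemma in_components:
  assumes "v \<in> V"
  shows "\<exists>K\<in>components V F ends. v \<in> K"
proof
  show "Restr ((adjacency F ends)\<^sup>*) V `` {v} \<in> components V F ends"
    unfolding components_eq_quotient using assms by (rule quotientI)
  show "v \<in> Restr ((adjacency F ends)\<^sup>*) V `` {v}" using assms by simp
qed

lemma component_connected:
  assumes "K \<in> components V F ends" "a \<in> K" "b \<in> K"
  shows "(a, b) \<in> (adjacency F ends)\<^sup>*"
proof -
  have "(a, b) \<in> Restr ((adjacency F ends)\<^sup>*) V"
    using in_quotient_imp_in_rel[OF equiv_component_relation assms(1)[unfolded components_eq_quotient]]
      assms(2,3) by simp
  then show ?thesis by simp
qed

lemma component_edge_closed: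
  assumes g: "graph V F ends" and K: "K \<in> components V F ends"
    and e: "e \<in> F" "a \<in> ends e" "a \<in> K"
  shows "ends e \<subseteq> K"
proof
  fix b assume b: "b \<in> ends e"
  have "ends e \<subseteq> V" using g e(1) unfolding graph_def by auto
  moreover have "(a, b) \<in> (adjacency F ends)\<^sup>*"
  proof (cases "a = b")
    case False
    obtain u w where "ends e = {u, w}" using graph_edgeE[OF g e(1)] by metis
    with False e(2) b have "ends e = {a, b}" by auto
    then show ?thesis using e(1) unfolding adjacency_def by blast
  qed simp
  ultimately have "(a, b) \<in> Restr ((adjacency F ends)\<^sup>*) V" using e(2) b by auto
  then show "b \<in> K"
    by (rule in_quotient_imp_closed[OF equiv_component_relation K[unfolded components_eq_quotient] e(3)])
qed

lemma rtrancl_abs_eq: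
  fixes y :: "'a \<Rightarrow> real"
  assumes "\<And>a b. (a, b) \<in> R \<Longrightarrow> y a = - y b" and "(a, b) \<in> R\<^sup>*"
  shows "\<bar>y a\<bar> = \<bar>y b\<bar>"
  using assms(2) by induction (auto dest: assms(1))

lemma antisymmetric_weight_abs_eq:
  assumes anti: "\<forall>e\<in>F. \<forall>a b. ends e = {a, b} \<longrightarrow> y a + y b = (0::real)"
    and K: "K \<in> components V F ends" and "a \<in> K" "b \<in> K"
  shows "\<bar>y a\<bar> = \<bar>y b\<bar>"
proof (rule rtrancl_abs_eq[of "adjacency F ends"])
  fix u v assume "(u, v) \<in> adjacency F ends"
  then show "y u = - y v" using anti unfolding adjacency_def by (auto simp: eq_neg_iff_add_eq_0)
next
  show "(a, b) \<in> (adjacency F ends)\<^sup>*" using component_connected[OF K] assms(3,4) .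
qed

lemma antisymmetric_weight_bipartite:
  assumes anti: "\<forall>e\<in>F. \<forall>a b. ends e = {a, b} \<longrightarrow> y a + y b = (0::real)"
    and K: "K \<in> components V F ends" and v: "v \<in> K" "y v \<noteq> 0"
  shows "bipartite_on K F ends"
  unfolding bipartite_on_def
proof (intro exI[of _ "\<lambda>w. 0 < y w"] ballI impI allI)
  fix e a b assume e: "e \<in> F" "ends e \<subseteq> K" "ends e = {a, b}"
  then have "\<bar>y a\<bar> = \<bar>y v\<bar>" using antisymmetric_weight_abs_eq[OF anti K] v(1) by blast
  moreover have "y a + y b = 0" using anti e by blast
  ultimately show "(0 < y a) \<noteq> (0 < y b)" using v(2) by auto
qed

definition signed_incidence :: "'e set \<Rightarrow> ('e \<Rightarrow> 'v set) \<Rightarrow> ('e \<Rightarrow> bool) \<Rightarrow> 'v \<Rightarrow> real^'e::finite" where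
  "signed_incidence F ends C v = (\<chi> e. if e \<in> F \<and> v \<in> ends e then colour_sign C e else 0)"

lemma signed_incidence_combination_eq_0_iff:
  assumes g: "graph V F ends"
  shows "(\<Sum>v\<in>V. y v *\<^sub>R signed_incidence F ends C v) = 0 \<longleftrightarrow>
    (\<forall>e\<in>F. \<forall>a b. ends e = {a, b} \<longrightarrow> y a + y b = 0)"
proof -
  have fin: "finite V" and sub: "\<And>e. e \<in> F \<Longrightarrow> ends e \<subseteq> V" using g unfolding graph_def by auto
  have "(\<Sum>v\<in>V. y v *\<^sub>R signed_incidence F ends C v) $ e =
      (if e \<in> F then colour_sign C e * (\<Sum>v\<in>ends e. y v) else 0)" for e
  proof -
    have "(\<Sum>v\<in>V. y v *\<^sub>R signed_incidence F ends C v) $ e =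
        (\<Sum>v\<in>V. if e \<in> F \<and> v \<in> ends e then colour_sign C e * y v else 0)"
      unfolding signed_incidence_def by (auto intro!: sum.cong)
    also have "\<dots> = (if e \<in> F then (\<Sum>v\<in>V \<inter> ends e. colour_sign C e * y v) else 0)"
      using fin by (simp add: sum.inter_restrict)
    also have "\<dots> = (if e \<in> F then colour_sign C e * (\<Sum>v\<in>ends e. y v) else 0)"
      using sub by (simp add: Int_absorb1 sum_distrib_left)
    finally show ?thesis .
  qed
  then have "(\<Sum>v\<in>V. y v *\<^sub>R signed_incidence F ends C v) = 0 \<longleftrightarrow> (\<forall>e\<in>F. (\<Sum>v\<in>ends e. y v) = 0)"
    by (simp add: vec_eq_iff colour_sign_def Ball_def)
  also have "\<dots> \<longleftrightarrow> (\<forall>e\<in>F. \<forall>a b. ends e = {a, b} \<longrightarrow> y a + y b = 0)"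
  proof (intro ball_cong refl)
    fix e assume e: "e \<in> F"
    obtain a b where "ends e = {a, b}" using graph_edgeE[OF g e] by metis
    moreover have "(\<Sum>v\<in>ends e. y v) = y a + y b" if "ends e = {a, b}" for a b
      using graph_ends_distinct[OF g e that] that by simp
    ultimately show "(\<Sum>v\<in>ends e. y v) = 0 \<longleftrightarrow> (\<forall>a b. ends e = {a, b} \<longrightarrow> y a + y b = 0)"
      by metis
  qed
  finally show ?thesis .
qed

lemma bipartite_component_row_in_span:
  assumes g: "graph V F ends" and K: "K \<in> components V F ends"
    and bip: "bipartite_on K F ends" and p: "p \<in> K"
  shows "signed_incidence F ends C p \<in> span (signed_incidence F ends C ` (K - {p}))"
proof -
  let ?r = "signed_incidence F ends C"
  obtain f where f: "\<forall>e\<in>F. ends e \<subseteq> K \<longrightarrow> (\<forall>u v. ends e = {u, v} \<longrightarrow> f u \<noteq> (f v :: bool))"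
    using bip unfolding bipartite_on_def by blast
  define s where "s w = (if w \<notin> K then 0 else if f w = f p then 1 else -1 :: real)" for w
  have KV: "K \<subseteq> V" using components_subset[OF K] .
  have fin: "finite V" using g unfolding graph_def by simp
  have finK: "finite K" using finite_subset[OF KV fin] .
  have anti: "\<forall>e\<in>F. \<forall>a b. ends e = {a, b} \<longrightarrow> s a + s b = 0"
  proof (intro ballI allI impI)
    fix e a b assume e: "e \<in> F" "ends e = {a, b}"
    show "s a + s b = 0"
    proof (cases "a \<in> K \<or> b \<in> K")
      case True
      then have "ends e \<subseteq> K" using component_edge_closed[OF g K e(1)] e(2) by blast
      moreover from this have "f a \<noteq> f b" using f e by blast
      ultimately show ?thesis using e(2) unfolding s_def by (cases "f a"; cases "f p") auto
    qed (auto simp: s_def)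
  qed
  have "(\<Sum>v\<in>V. s v *\<^sub>R ?r v) = 0"
    using anti unfolding signed_incidence_combination_eq_0_iff[OF g] .
  moreover have "(\<Sum>v\<in>V. s v *\<^sub>R ?r v) = (\<Sum>w\<in>K. s w *\<^sub>R ?r w)"
    by (rule sum.mono_neutral_right[OF fin KV]) (simp add: s_def)
  moreover have "(\<Sum>w\<in>K. s w *\<^sub>R ?r w) = ?r p + (\<Sum>w\<in>K - {p}. s w *\<^sub>R ?r w)"
    using sum.remove[OF finK p, of "\<lambda>w. s w *\<^sub>R ?r w"] p by (simp add: s_def)
  ultimately have "?r p = - (\<Sum>w\<in>K - {p}. s w *\<^sub>R ?r w)" by (simp add: eq_neg_iff_add_eq_0)
  also have "\<dots> \<in> span (?r ` (K - {p}))"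
    by (intro span_neg span_sum span_scale span_base imageI)
  finally show ?thesis .
qed

lemma independent_image_if_combinations_trivial:
  fixes f :: "'a \<Rightarrow> 'b::real_vector"
  assumes fin: "finite S" and trivial: "\<And>u. (\<Sum>v\<in>S. u v *\<^sub>R f v) = 0 \<Longrightarrow> \<forall>v\<in>S. u v = 0"
  shows "inj_on f S" "independent (f ` S)"
proof -
  show inj: "inj_on f S"
  proof (rule inj_onI, rule ccontr)
    fix a b assume ab: "a \<in> S" "b \<in> S" "f a = f b" "a \<noteq> b"
    define u where "u v = (if v = a then 1 else if v = b then -1 else 0 :: real)" for v
    have "(\<Sum>v\<in>S. u v *\<^sub>R f v) = (\<Sum>v\<in>S. (if v = a then f a else 0) - (if v = b then f b else 0))"
      using ab(4) unfolding u_def by (intro sum.cong) auto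
    also have "\<dots> = 0" using ab fin by (simp add: sum_subtractf)
    finally show False using trivial[of u] ab(1) unfolding u_def by auto
  qed
  show "independent (f ` S)"
  proof
    assume "dependent (f ` S)"
    then obtain u where u: "\<exists>w\<in>f ` S. u w \<noteq> 0" "(\<Sum>w\<in>f ` S. u w *\<^sub>R w) = 0"
      using fin unfolding dependent_finite[OF finite_imageI[OF fin]] by blast
    then have "(\<Sum>v\<in>S. u (f v) *\<^sub>R f v) = 0" by (simp add: sum.reindex[OF inj])
    then have "\<forall>v\<in>S. u (f v) = 0" by (rule trivial)
    then show False using u(1) by auto
  qed
qed

lemma signed_incidence_rows_independent:
  assumes g: "graph V F ends" and V0: "V0 \<subseteq> V"
    and meets: "\<And>K. K \<in> components V F ends \<Longrightarrow> bipartite_on K F ends \<Longrightarrow> \<exists>r\<in>K. r \<notin> V0"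
    and y: "(\<Sum>v\<in>V0. y v *\<^sub>R signed_incidence F ends C v) = 0"
  shows "\<forall>v\<in>V0. y v = 0"
proof
  fix v assume v: "v \<in> V0"
  let ?r = "signed_incidence F ends C"
  define Y where "Y w = (if w \<in> V0 then y w else 0)" for w
  have fin: "finite V" using g unfolding graph_def by simp
  have "(\<Sum>w\<in>V. Y w *\<^sub>R ?r w) = (\<Sum>w\<in>V0. Y w *\<^sub>R ?r w)"
    by (rule sum.mono_neutral_right[OF fin V0]) (auto simp: Y_def)
  also have "\<dots> = (\<Sum>w\<in>V0. y w *\<^sub>R ?r w)" by (auto simp: Y_def intro!: sum.cong)
  finally have "(\<Sum>w\<in>V. Y w *\<^sub>R ?r w) = 0" using y by simp
  then have anti: "\<forall>e\<in>F. \<forall>a b. ends e = {a, b} \<longrightarrow> Y a + Y b = 0"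
    unfolding signed_incidence_combination_eq_0_iff[OF g] .
  obtain K where K: "K \<in> components V F ends" "v \<in> K"
    using in_components[of v V F ends] v V0 by blast
  have "Y v = 0"
  proof (cases "bipartite_on K F ends")
    case True
    then obtain r where "r \<in> K" "r \<notin> V0" using meets K(1) by blast
    then show ?thesis using antisymmetric_weight_abs_eq[OF anti K(1) _ K(2), of r] by (simp add: Y_def)
  next
    case False
    then show ?thesis using antisymmetric_weight_bipartite[OF anti K] by blast
  qed
  then show "y v = 0" using v unfolding Y_def by simp
qed

lemma bipartite_components_transversal:
  fixes V :: "'v set"
  assumes fin: "finite V"
  obtains R where "R \<subseteq> V" "card R = num_bip_components V F ends"
    "\<And>K. K \<in> components V F ends \<Longrightarrow> bipartite_on K F ends \<Longrightarrow> \<exists>r. K \<inter> R = {r}"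
    "\<And>r. r \<in> R \<Longrightarrow> \<exists>K\<in>components V F ends. bipartite_on K F ends \<and> r \<in> K"
proof -
  define Bip where "Bip = {K \<in> components V F ends. bipartite_on K F ends}"
  define root where "root K = (SOME v. v \<in> K)" for K :: "'v set"
  have root: "root K \<in> K" if "K \<in> components V F ends" for K
    using components_nonempty[OF that] unfolding root_def by (auto intro: someI_ex)
  have root_unique: "K' = K" if "K \<in> Bip" "K' \<in> Bip" "root K' \<in> K" for K K'
  proof (rule ccontr)
    assume "K' \<noteq> K"
    then have "K' \<inter> K = {}" using components_disjoint that(1,2) unfolding Bip_def by blast
    then show False using root that unfolding Bip_def by blast
  qed
  have "inj_on root Bip"
  proof (rule inj_onI)
    fix K K' assume K: "K \<in> Bip" "K' \<in> Bip" "root K = root K'"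
    then have "root K' \<in> K" using root unfolding Bip_def by force
    then show "K = K'" using root_unique[OF K(1,2)] by simp
  qed
  then have "card (root ` Bip) = num_bip_components V F ends"
    unfolding num_bip_components_def Bip_def by (simp add: card_image)
  moreover have "root ` Bip \<subseteq> V" using root components_subset unfolding Bip_def by blast
  moreover have "\<exists>r. K \<inter> root ` Bip = {r}" if "K \<in> components V F ends" "bipartite_on K F ends" for K
    using that root_unique root unfolding Bip_def by (intro exI[of _ "root K"]) blast
  moreover have "\<exists>K\<in>components V F ends. bipartite_on K F ends \<and> r \<in> K" if "r \<in> root ` Bip" for r
    using that root unfolding Bip_def by blast
  ultimately show ?thesis using that by blast
qed

text \<open>Delete one vertex from every bipartite component: the rows of the remaining vertices form
  a basis.\<close>
lemma dim_signed_incidence: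
  assumes g: "graph V F ends"
  shows "dim (signed_incidence F ends C ` V) + num_bip_components V F ends = card V"
proof -
  let ?r = "signed_incidence F ends C"
  have fin: "finite V" using g unfolding graph_def by simp
  obtain R where R: "R \<subseteq> V" "card R = num_bip_components V F ends"
    and meets: "\<And>K. K \<in> components V F ends \<Longrightarrow> bipartite_on K F ends \<Longrightarrow> \<exists>r. K \<inter> R = {r}"
    and covered: "\<And>r. r \<in> R \<Longrightarrow> \<exists>K\<in>components V F ends. bipartite_on K F ends \<and> r \<in> K"
    using bipartite_components_transversal[OF fin] by blast
  define V0 where "V0 = V - R"
  have V0: "V0 \<subseteq> V" "finite V0" using fin unfolding V0_def by auto
  have outside: "\<exists>r\<in>K. r \<notin> V0" if K: "K \<in> components V F ends" "bipartite_on K F ends" for K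
  proof -
    obtain r where "K \<inter> R = {r}" using meets[OF K] by blast
    then show ?thesis unfolding V0_def by blast
  qed
  have trivial: "\<forall>v\<in>V0. y v = 0" if "(\<Sum>v\<in>V0. y v *\<^sub>R ?r v) = 0" for y
    by (rule signed_incidence_rows_independent[OF g V0(1) outside that])
  have inj0: "inj_on ?r V0" using V0(2) trivial by (rule independent_image_if_combinations_trivial)
  have indep0: "independent (?r ` V0)"
    using V0(2) trivial by (rule independent_image_if_combinations_trivial)
  have span_V: "?r v \<in> span (?r ` V0)" if v: "v \<in> V" for v
  proof (cases "v \<in> R")
    case True
    then obtain K where K: "K \<in> components V F ends" "bipartite_on K F ends" "v \<in> K"
      using covered by blast
    obtain r where "K \<inter> R = {r}" using meets[OF K(1,2)] by blast
    then have "K \<inter> R = {v}" using K(3) \<open>v \<in> R\<close> by (metis IntI singletonD)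
    then have "K - {v} \<subseteq> V0"
      using components_subset[OF K(1)] unfolding V0_def by blast
    then have "span (?r ` (K - {v})) \<subseteq> span (?r ` V0)" by (intro span_mono image_mono)
    moreover have "?r v \<in> span (?r ` (K - {v}))"
      using bipartite_component_row_in_span[OF g K] .
    ultimately show ?thesis by blast
  qed (simp add: V0_def span_base v)
  have "dim (?r ` V) = card (?r ` V0)"
  proof (rule dim_unique)
    show "?r ` V0 \<subseteq> ?r ` V" using V0(1) by blast
    show "?r ` V \<subseteq> span (?r ` V0)" using span_V by blast
    show "independent (?r ` V0)" by (rule indep0)
  qed simp
  moreover have "card V0 = card V - card R"
    unfolding V0_def using card_Diff_subset[OF finite_subset[OF R(1) fin] R(1)] .
  moreover have "card R \<le> card V" using card_mono[OF fin R(1)] .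
  ultimately show ?thesis using R(2) card_image[OF inj0] by simp
qed

lemma dim_balanced_space:
  fixes E :: "'e::finite set"
  assumes FE: "F \<subseteq> E" and fin: "finite E"
  shows "dim (balanced_space V E ends C F) + dim (signed_incidence F ends C ` V) = card F"
proof -
  let ?r = "signed_incidence F ends C"
  let ?R = "span (?r ` V)"
  define B where "B = {x :: real^'e. \<forall>i. i \<notin> F \<longrightarrow> x $ i = 0}"
  have B: "subspace B" unfolding B_def subspace_def by auto
  have RB: "?R \<subseteq> B"
    using B by (intro span_minimal) (auto simp: B_def signed_incidence_def)
  have inner: "?r v \<bullet> y = balance E ends C (($) y) v" if "y \<in> B" for v y
  proof -
    have "?r v \<bullet> y = (\<Sum>e\<in>UNIV. if e \<in> {e\<in>E. v \<in> ends e} then colour_sign C e * y $ e else 0)"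
      using that FE unfolding inner_vec_def signed_incidence_def B_def by (intro sum.cong) auto
    then show ?thesis unfolding balance_def by (simp add: sum.If_cases)
  qed
  have orth: "(\<forall>x\<in>?R. orthogonal x y) \<longleftrightarrow> (\<forall>v\<in>V. ?r v \<bullet> y = 0)" for y
  proof
    assume h: "\<forall>x\<in>?R. orthogonal x y"
    show "\<forall>v\<in>V. ?r v \<bullet> y = 0"
    proof
      fix v assume "v \<in> V"
      then have "?r v \<in> ?R" by (intro span_base imageI)
      then show "?r v \<bullet> y = 0" using h by (simp add: orthogonal_def)
    qed
  next
    assume h: "\<forall>v\<in>V. ?r v \<bullet> y = 0"
    show "\<forall>x\<in>?R. orthogonal x y"
    proof
      fix x assume "x \<in> ?R"
      then have "orthogonal y x"
        by (rule orthogonal_to_span) (use h in \<open>auto simp: orthogonal_def inner_commute\<close>)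
      then show "orthogonal x y" by (simp add: orthogonal_commute)
    qed
  qed
  have "balanced_space V E ends C F = {y \<in> B. \<forall>x\<in>?R. orthogonal x y}"
    unfolding orth using inner unfolding balanced_space_def B_def by auto
  then have "dim (balanced_space V E ends C F) + dim ?R = dim B"
    using dim_subspace_orthogonal_to_vectors[OF subspace_span B RB] by simp
  moreover have "vec.dim B = card F" unfolding B_def by (rule dim_substandard_cart)
  then have "dim B = card F" by (simp add: dim_vec_eq)
  ultimately show ?thesis by simp
qed

theorem theorem2p6:
  fixes V :: "'v set" and E :: "'e::finite set" and ends :: "'e \<Rightarrow> 'v set"
    and C :: "'e \<Rightarrow> bool" and d :: "'v \<Rightarrow> nat"
  assumes "graph V E ends"
    and "\<forall>v\<in>V. d v = red_degree E ends C v"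
  shows "int (dim (alt_cone V E ends C)) =
           int (card (E_d V E ends d)) - int (card V) + int (num_bip_components V (E_d V E ends d) ends)"
proof -
  note g = assms(1) and d = assms(2)
  define F where "F = E_d V E ends d"
  have fin: "finite E" using g unfolding graph_def by simp
  have FE: "F \<subseteq> E" unfolding F_def E_d_def by auto
  have gF: "graph V F ends" using g FE finite_subset unfolding graph_def by blast
  have "span (alt_cone V E ends C) = balanced_space V E ends C F"
    unfolding alt_cone_eq_nonneg_balanced[OF g d] F_def
  proof (rule span_nonneg_part_of_subspace[OF subspace_balanced_space])
    fix e assume "\<exists>y\<in>balanced_space V E ends C (E_d V E ends d). y $ e \<noteq> 0"
    then have "e \<in> E_d V E ends d" unfolding balanced_space_def by auto
    then show "\<exists>x\<in>balanced_space V E ends C (E_d V E ends d). (\<forall>j. 0 \<le> x $ j) \<and> 0 < x $ e"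
      using E_d_imp_alt_cone_positive[OF g d] unfolding alt_cone_eq_nonneg_balanced[OF g d] by blast
  qed
  then have "dim (alt_cone V E ends C) = dim (balanced_space V E ends C F)"
    by (metis dim_span)
  moreover have "dim (balanced_space V E ends C F) + dim (signed_incidence F ends C ` V) = card F"
    by (rule dim_balanced_space[OF FE fin])
  moreover have "dim (signed_incidence F ends C ` V) + num_bip_components V F ends = card V"
    by (rule dim_signed_incidence[OF gF])
  ultimately show ?thesis unfolding F_def by linarith
qed

end
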